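(* Let $\Phi$ be any one of the three homomorphisms $\Psi,\Psi^+,\Psi^-:\mathsf{PGL}_2(\mathbb Z)\to\mathsf{PGL}_2(\mathbb C(q))$ defined by $\Phi(T)=\begin{bmatrix}q&1\\0&1\end{bmatrix}$ and $$\Psi(S)=\begin{bmatrix}0&-1\\ q&0\end{bmatrix},\ \Psi(V)=\begin{bmatrix}q&1-q\\ q-q^2&-q\end{bmatrix};\qquad \Psi^{\pm}(S)=\begin{bmatrix}1&q^{-1}\\ -q+\omega^{\pm1}&-1\end{bmatrix},\ \Psi^{\pm}(V)=\begin{bmatrix}1&\frac{1+q^{-1}}{q-\omega^{\pm1}}\\ 1-q&-1\end{bmatrix}.$$ Then there is no map $\psi:\mathsf P^1(\mathbb Z)\to\mathsf P^1(\mathbb C(q))$ satisfying $\psi(gx)=\Phi(g)\psi(x)$ for all $g\in\mathsf{PGL}_2(\mathbb Z)$ and $x\in\mathsf P^1(\mathbb Z)$. (Indeed $\psi(1)$ would have to be a fixed point of $\Phi(U)$, $U(x)=1/x$, and these fixed points involve $\sqrt{q^2-q+1}\notin\mathbb C(q)$.)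
   Context: $\omega=e^{2\pi i/6}$. An invertible matrix $\begin{bmatrix}a&b\\c&d\end{bmatrix}$ denotes the Möbius map $x\mapsto(ax+b)/(cx+d)$. In $\mathsf{PGL}_2(\mathbb Z)$: $T(x)=1+x$, $S(x)=-1/x$, $V(x)=-x$, which generate it; $\mathsf P^1(\mathbb Z)=\mathbb Q\cup\{\infty\}$ and $\mathsf P^1(\mathbb C(q))=\mathbb C(q)\cup\{\infty\}$ with Möbius actions. *)

theory Defs
  imports Complex_Main "HOL-Computational_Algebra.Polynomial" "HOL-Computational_Algebra.Fraction_Field"
begin

text \<open>2x2 matrices [a b; c d]\<close>
datatype 'a m2 = M2 'a 'a 'a 'a

fun m2mult :: "'a::comm_ring_1 m2 \<Rightarrow> 'a m2 \<Rightarrow> 'a m2" where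
  "m2mult (M2 a b c d) (M2 a' b' c' d') =
     M2 (a*a' + b*c') (a*b' + b*d') (c*a' + d*c') (c*b' + d*d')"

fun m2det :: "'a::comm_ring_1 m2 \<Rightarrow> 'a" where
  "m2det (M2 a b c d) = a*d - b*c"

fun m2smult :: "'a::comm_ring_1 \<Rightarrow> 'a m2 \<Rightarrow> 'a m2" where
  "m2smult k (M2 a b c d) = M2 (k*a) (k*b) (k*c) (k*d)"

fun m2map :: "('a \<Rightarrow> 'b) \<Rightarrow> 'a m2 \<Rightarrow> 'b m2" where
  "m2map f (M2 a b c d) = M2 (f a) (f b) (f c) (f d)"

text \<open>Two matrices represent the same element of PGL_2: they differ by a nonzero scalar.\<close>
definition proportional :: "'a::comm_ring_1 m2 \<Rightarrow> 'a m2 \<Rightarrow> bool" where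
  "proportional A B \<longleftrightarrow> (\<exists>k. k \<noteq> 0 \<and> A = m2smult k B)"

text \<open>Integer matrices with determinant \<plusminus>1 (representatives of PGL_2(Z)).\<close>
definition GL2Z :: "int m2 set" where
  "GL2Z = {A. m2det A = 1 \<or> m2det A = -1}"

datatype 'a p1 = Fin 'a | Infty

fun mob :: "'a::field m2 \<Rightarrow> 'a p1 \<Rightarrow> 'a p1" where
  "mob (M2 a b c d) Infty = (if c = 0 then Infty else Fin (a / c))"
| "mob (M2 a b c d) (Fin x) = (if c*x + d = 0 then Infty else Fin ((a*x + b) / (c*x + d)))"

type_synonym Cq = "complex poly fract"

definition cst :: "complex \<Rightarrow> Cq" where
  "cst c = Fract [:c:] 1"

definition qv :: Cq where
  "qv = Fract [:0, 1:] 1"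

definition omega :: complex where
  "omega = exp (2 * pi * \<i> / 6)"

definition Tm :: "int m2" where "Tm = M2 1 1 0 1"
definition Sm :: "int m2" where "Sm = M2 0 (-1) 1 0"
definition Vm :: "int m2" where "Vm = M2 (-1) 0 0 1"

definition PhiT :: "Cq m2" where "PhiT = M2 qv 1 0 1"

definition PsiS :: "Cq m2" where "PsiS = M2 0 (-1) qv 0"
definition PsiV :: "Cq m2" where "PsiV = M2 qv (1 - qv) (qv - qv^2) (- qv)"

text \<open>\<Psi>^\<plusminus> with w = \<omega>^{\<plusminus>1}\<close>
definition PsiPM_S :: "complex \<Rightarrow> Cq m2" where
  "PsiPM_S w = M2 1 (inverse qv) (- qv + cst w) (-1)"
definition PsiPM_V :: "complex \<Rightarrow> Cq m2" where
  "PsiPM_V w = M2 1 ((1 + inverse qv) / (qv - cst w)) (1 - qv) (-1)"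

text \<open>A homomorphism PGL_2(Z) \<rightarrow> PGL_2(C(q)), represented on matrix lifts.\<close>
definition pgl_hom :: "(int m2 \<Rightarrow> Cq m2) \<Rightarrow> bool" where
  "pgl_hom \<Phi> \<longleftrightarrow>
     (\<forall>A\<in>GL2Z. m2det (\<Phi> A) \<noteq> 0) \<and>
     (\<forall>A\<in>GL2Z. proportional (\<Phi> (m2smult (-1) A)) (\<Phi> A)) \<and>
     (\<forall>A\<in>GL2Z. \<forall>B\<in>GL2Z. proportional (\<Phi> (m2mult A B)) (m2mult (\<Phi> A) (\<Phi> B)))"

end

theory Submission
  imports Defs
begin

text \<open>The matrix \<open>U = V S\<close> acts as \<open>x \<mapsto> 1/x\<close> and fixes \<open>1\<close>, so \<open>\<psi>(1)\<close> would be a fixed point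
  of \<open>\<Phi>(U)\<close>, which is proportional to \<open>\<Phi>(V) \<Phi>(S)\<close>. A Moebius map \<open>[a b; c d]\<close> with \<open>c \<noteq> 0\<close> has a
  fixed point in a field only if its discriminant \<open>(d - a)\<^sup>2 + 4 b c\<close> is a square there. For each of
  the three candidate images of \<open>U\<close> this discriminant is a nonzero square times \<open>q\<^sup>2 - q + 1\<close>, which
  is not a square in \<open>\<complex>(q)\<close> because its root \<open>\<omega>\<close> is simple.\<close>

lemma mob_smult: "k \<noteq> 0 \<Longrightarrow> mob (m2smult k A) P = mob A P"
  by (cases A; cases P) (auto simp: distrib_left[symmetric] mult.assoc)

lemma proportional_mob: "proportional A B \<Longrightarrow> mob A P = mob B P"
  unfolding proportional_def using mob_smult by blast

lemma m2mult_m2smult: "m2mult (m2smult k A) (m2smult l B) = m2smult (k * l) (m2mult A B)"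
  by (cases A; cases B) (simp add: algebra_simps)

lemma proportional_m2mult:
  fixes A B C D :: "'a::idom m2"
  assumes "proportional A B" and "proportional C D"
  shows "proportional (m2mult A C) (m2mult B D)"
  using assms unfolding proportional_def by (metis m2mult_m2smult mult_eq_0_iff)

lemma mob_fixed_point_imp_square_disc:
  fixes a b c d :: "'a::field"
  assumes c: "c \<noteq> 0" and fixed: "mob (M2 a b c d) P = P"
  shows "\<exists>y. y\<^sup>2 = (d - a)\<^sup>2 + 4 * b * c"
proof (cases P)
  case Infty
  then show ?thesis using fixed c by simp
next
  case (Fin x)
  with fixed have "c * x + d \<noteq> 0" and "(a * x + b) / (c * x + d) = x"
    by (auto split: if_splits)
  then have "a * x + b = x * (c * x + d)" by (simp add: field_simps)
  then have "(2 * c * x + d - a)\<^sup>2 = (d - a)\<^sup>2 + 4 * b * c" by algebra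
  then show ?thesis by blast
qed

lemma mob_no_fixed_point:
  fixes a b c d z f :: "'a::field"
  assumes "c \<noteq> 0" and "z \<noteq> 0" and disc: "(d - a)\<^sup>2 + 4 * b * c = z\<^sup>2 * f"
    and not_square: "\<nexists>y. y\<^sup>2 = f"
  shows "mob (M2 a b c d) P \<noteq> P"
proof
  assume "mob (M2 a b c d) P = P"
  then obtain y where "y\<^sup>2 = z\<^sup>2 * f"
    using mob_fixed_point_imp_square_disc \<open>c \<noteq> 0\<close> disc by metis
  then have "(y / z)\<^sup>2 = f" using \<open>z \<noteq> 0\<close> by (simp add: power_divide)
  then show False using not_square by blast
qed

lemma Fract_not_square_if_odd_order:
  fixes p :: "'a::idom poly"
  assumes "p \<noteq> 0" and odd: "odd (order a p)"
  shows "\<nexists>y. y\<^sup>2 = Fract p 1"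
proof
  assume "\<exists>y. y\<^sup>2 = Fract p 1"
  then obtain y where "y\<^sup>2 = Fract p 1" ..
  moreover obtain s r where "y = Fract s r" and "r \<noteq> 0" by (cases y)
  ultimately have "(Fract s r)\<^sup>2 = Fract p 1" by simp
  then have eq: "s * s = p * (r * r)"
    using \<open>r \<noteq> 0\<close> by (simp add: power2_eq_square eq_fract mult.commute)
  with \<open>p \<noteq> 0\<close> \<open>r \<noteq> 0\<close> have "s \<noteq> 0" by auto
  have "order a s + order a s = order a (s * s)"
    using \<open>s \<noteq> 0\<close> by (simp add: order_mult)
  also have "\<dots> = order a p + (order a r + order a r)"
    unfolding eq using \<open>p \<noteq> 0\<close> \<open>r \<noteq> 0\<close> by (simp add: order_mult)
  finally show False using odd by presburger
qed

lemma omega_eq: "omega = Complex (1 / 2) (sqrt 3 / 2)"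
proof -
  have "2 * pi * \<i> / 6 = \<i> * complex_of_real (pi / 3)" by (simp add: field_simps)
  then have "omega = cis (pi / 3)" unfolding omega_def cis_conv_exp by simp
  then show ?thesis by (simp add: cos_60 sin_60 complex_eq_iff)
qed

lemma omega_nonzero: "omega \<noteq> 0"
  by (simp add: omega_eq complex_eq_iff)

lemma omega_root: "omega\<^sup>2 - omega + 1 = 0"
  by (simp add: omega_eq complex_eq_iff power2_eq_square field_simps)

lemma inverse_omega_root: "(inverse omega)\<^sup>2 - inverse omega + 1 = 0"
  using omega_root omega_nonzero by (simp add: field_simps power2_eq_square)

lemma order_omega_q2_q_1: "order omega [:1, -1, 1:] = 1"
proof -
  have factor: "[:1, -1, 1:] = [:-omega, 1:] * [:-cnj omega, 1:]"
    by (simp add: omega_eq complex_eq_iff field_simps)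
  have "cnj omega \<noteq> omega" by (simp add: omega_eq complex_eq_iff)
  then have "order omega [:-cnj omega, 1:] = 0" by (intro order_0I) simp
  moreover have "order omega [:-omega, 1:] = 1" using order_power_n_n[of omega 1] by simp
  ultimately show ?thesis
    using order_mult[of "[:-omega, 1:]" "[:-cnj omega, 1:]" omega] factor by simp
qed

lemma q2_q_1_not_square: "\<nexists>y :: Cq. y\<^sup>2 = qv\<^sup>2 - qv + 1"
proof -
  have "qv\<^sup>2 - qv + 1 = Fract [:1, -1, 1:] 1"
    by (simp add: qv_def power2_eq_square One_fract_def one_pCons)
  then show ?thesis
    using Fract_not_square_if_odd_order[of "[:1, -1, 1:]" omega] order_omega_q2_q_1 by simp
qed

lemma qv_nonzero: "qv \<noteq> 0"
  by (simp add: qv_def Zero_fract_def eq_fract)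

lemma two_nonzero: "(2 :: Cq) \<noteq> 0"
proof -
  have "(2 :: Cq) = Fract 2 1" using of_nat_fract[of 2] by simp
  moreover have "Fract (2 :: complex poly) 1 \<noteq> 0" by (simp add: Zero_fract_def eq_fract)
  ultimately show ?thesis by simp
qed

lemma mob_PsiV_PsiS_no_fixed_point: "mob (m2mult PsiV PsiS) P \<noteq> P"
proof -
  define q where "q = qv"
  have "q \<noteq> 0" using qv_nonzero q_def by simp
  have "m2mult PsiV PsiS = M2 ((1 - q) * q) (- q) (- q * q) (q\<^sup>2 - q)"
    by (simp add: PsiV_def PsiS_def q_def)
  moreover have "mob (M2 ((1 - q) * q) (- q) (- q * q) (q\<^sup>2 - q)) P \<noteq> P"
  proof (rule mob_no_fixed_point)
    show "- q * q \<noteq> 0" and "2 * q \<noteq> 0" using \<open>q \<noteq> 0\<close> two_nonzero by simp_all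
    show "(q\<^sup>2 - q - (1 - q) * q)\<^sup>2 + 4 * - q * (- q * q) = (2 * q)\<^sup>2 * (q\<^sup>2 - q + 1)"
      by algebra
    show "\<nexists>y. y\<^sup>2 = q\<^sup>2 - q + 1" using q2_q_1_not_square q_def by simp
  qed
  ultimately show ?thesis by simp
qed

lemma mob_PsiPM_V_PsiPM_S_no_fixed_point:
  assumes root: "w\<^sup>2 - w + 1 = 0"
  shows "mob (m2mult (PsiPM_V w) (PsiPM_S w)) P \<noteq> P"
proof -
  define q W where "q = qv" and "W = cst w"
  define X where "X = (1 + inverse q) / (q - W)"
  have "q \<noteq> 0" using qv_nonzero q_def by simp
  have "q - W \<noteq> 0" by (simp add: q_def W_def qv_def cst_def Zero_fract_def eq_fract)
  have "W\<^sup>2 - W + 1 = cst (w\<^sup>2 - w + 1)"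
    by (simp add: W_def cst_def power2_eq_square One_fract_def one_pCons)
  then have W_root: "W\<^sup>2 - W + 1 = 0"
    using root by (simp add: cst_def Zero_fract_def)
  have "w \<noteq> 0" and "w \<noteq> 1" using root by auto
  then have "W \<noteq> 0" and "1 - W \<noteq> 0"
    by (simp_all add: W_def cst_def Zero_fract_def One_fract_def eq_fract one_pCons)
  have "m2mult (PsiPM_V w) (PsiPM_S w) =
      M2 (1 + X * (W - q)) (inverse q - X) (1 - W) ((1 - q) * inverse q + 1)"
    by (simp add: PsiPM_V_def PsiPM_S_def q_def W_def X_def algebra_simps add_divide_distrib[symmetric])
  moreover have "mob (M2 (1 + X * (W - q)) (inverse q - X) (1 - W) ((1 - q) * inverse q + 1)) P \<noteq> P"
  proof (rule mob_no_fixed_point)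
    show "1 - W \<noteq> 0" by fact
    show "2 * W / (q * (q - W)) \<noteq> 0"
      using two_nonzero \<open>W \<noteq> 0\<close> \<open>q \<noteq> 0\<close> \<open>q - W \<noteq> 0\<close> by simp
    have inv_q: "inverse q * q = 1" and X: "X * (q - W) = 1 + inverse q"
      using \<open>q \<noteq> 0\<close> \<open>q - W \<noteq> 0\<close> by (simp_all add: X_def)
    then have "(inverse q - X) * (q * (q - W)) = - (W + 1)" by algebra
    then have "(((1 - q) * inverse q + 1 - (1 + X * (W - q)))\<^sup>2 + 4 * (inverse q - X) * (1 - W))
        * (q * (q - W))\<^sup>2 = (2 * W)\<^sup>2 * (q\<^sup>2 - q + 1)"
      using inv_q X W_root by algebra
    then show "((1 - q) * inverse q + 1 - (1 + X * (W - q)))\<^sup>2 + 4 * (inverse q - X) * (1 - W)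
        = (2 * W / (q * (q - W)))\<^sup>2 * (q\<^sup>2 - q + 1)"
      using \<open>q \<noteq> 0\<close> \<open>q - W \<noteq> 0\<close> by (simp add: power_divide field_simps)
    show "\<nexists>y. y\<^sup>2 = q\<^sup>2 - q + 1" using q2_q_1_not_square q_def by simp
  qed
  ultimately show ?thesis by simp
qed

theorem mainTheorem6:
  fixes \<Phi> :: "int m2 \<Rightarrow> Cq m2"
  assumes hom: "pgl_hom \<Phi>"
    and T: "proportional (\<Phi> Tm) PhiT"
    and SV: "(proportional (\<Phi> Sm) PsiS \<and> proportional (\<Phi> Vm) PsiV) \<or>
             (\<exists>w\<in>{omega, inverse omega}.
                proportional (\<Phi> Sm) (PsiPM_S w) \<and> proportional (\<Phi> Vm) (PsiPM_V w))"
  shows "\<not> (\<exists>\<psi> :: rat p1 \<Rightarrow> Cq p1.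
             \<forall>g\<in>GL2Z. \<forall>x. \<psi> (mob (m2map of_int g) x) = mob (\<Phi> g) (\<psi> x))"
proof
  assume "\<exists>\<psi> :: rat p1 \<Rightarrow> Cq p1. \<forall>g\<in>GL2Z. \<forall>x. \<psi> (mob (m2map of_int g) x) = mob (\<Phi> g) (\<psi> x)"
  then obtain \<psi> :: "rat p1 \<Rightarrow> Cq p1"
    where equivariant: "\<forall>g\<in>GL2Z. \<forall>x. \<psi> (mob (m2map of_int g) x) = mob (\<Phi> g) (\<psi> x)" by blast
  have "Vm \<in> GL2Z" and "Sm \<in> GL2Z" and "m2mult Vm Sm \<in> GL2Z"
    and "mob (m2map of_int (m2mult Vm Sm)) (Fin 1) = Fin (1 :: rat)"
    by (simp_all add: GL2Z_def Vm_def Sm_def)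
  then have "mob (\<Phi> (m2mult Vm Sm)) (\<psi> (Fin 1)) = \<psi> (Fin 1)"
    using equivariant by metis
  moreover have "proportional (\<Phi> (m2mult Vm Sm)) (m2mult (\<Phi> Vm) (\<Phi> Sm))"
    using hom \<open>Vm \<in> GL2Z\<close> \<open>Sm \<in> GL2Z\<close> unfolding pgl_hom_def by blast
  ultimately have fixed: "mob (m2mult (\<Phi> Vm) (\<Phi> Sm)) (\<psi> (Fin 1)) = \<psi> (Fin 1)"
    by (simp add: proportional_mob)
  from SV show False
  proof
    assume "proportional (\<Phi> Sm) PsiS \<and> proportional (\<Phi> Vm) PsiV"
    then show False
      using fixed proportional_m2mult proportional_mob mob_PsiV_PsiS_no_fixed_point by metis
  next
    assume "\<exists>w\<in>{omega, inverse omega}.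
              proportional (\<Phi> Sm) (PsiPM_S w) \<and> proportional (\<Phi> Vm) (PsiPM_V w)"
    then obtain w where "w\<^sup>2 - w + 1 = 0"
      and "proportional (\<Phi> Sm) (PsiPM_S w)" "proportional (\<Phi> Vm) (PsiPM_V w)"
      using omega_root inverse_omega_root by blast
    then show False
      using fixed proportional_m2mult proportional_mob mob_PsiPM_V_PsiPM_S_no_fixed_point by metis
  qed
qed

end
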